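(* Let $\mathcal X$ be the standard Borel space of countable irreflexive graphs with vertex set $\omega$ having no isolated vertices, and $\mathcal Y$ the standard Borel space of countable pointed reflexive graphs. There is a Borel map $F\colon\mathcal X\to\mathcal Y$ such that for all $\Gamma,\Delta\in\mathcal X$: $$\Gamma\preccurlyeq_1\Delta \iff F(\Gamma)\twoheadleftarrow F(\Delta).$$ Explicitly one may take, for $\Gamma=(V,R_\Gamma)$, $F(\Gamma)$ to be the graph on $V\cup\{c\}$ ($c$ a new vertex, the distinguished vertex) with edge set $(V^2\setminus R_\Gamma)\cup(\{c\}\times V)\cup(V\times\{c\})\cup\{(c,c)\}$. Consequently (using that $\preccurlyeq_1$ on $\mathcal X$ is a complete analytic quasi-order), the relation $\twoheadleftarrow$ on countable pointed reflexive graphs is a complete analytic quasi-order.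
   Context: A graph is $(V,R)$ with $R\subseteq V^2$ symmetric and irreflexive; a reflexive graph is $(V,R)$ with $R$ symmetric and $(a,a)\in R$ for all $a\in V$. A homomorphism $f\colon(V_\Gamma,R_\Gamma)\to(V_\Delta,R_\Delta)$ is a map $V_\Gamma\to V_\Delta$ with $(a,b)\in R_\Gamma\Rightarrow (f(a),f(b))\in R_\Delta$. For graphs, $\Gamma\preccurlyeq_1\Delta$ means there is an injective homomorphism from $\Gamma$ to $\Delta$. A pointed reflexive graph $\Gamma_c$ is a (possibly empty) reflexive graph $\Gamma$ together with an extra distinguished vertex $c$ (named by a constant) adjacent to every vertex, including itself. A homomorphism of pointed reflexive graphs is a homomorphism of reflexive graphs sending distinguished vertex to distinguished vertex. For pointed reflexive graphs, $\Gamma_c\twoheadleftarrow\Delta_c$ means there is a surjective homomorphism (of pointed reflexive graphs) from $\Delta_c$ onto $\Gamma_c$. A complete analytic quasi-order on a standard Borel space $Y$ is an analytic quasi-order $Q$ such that every analytic quasi-order $P$ on a standard Borel space $X$ Borel reduces to it: there is a Borel $f\colon X\to Y$ with $xPx'\iff f(x)Qf(x')$. *)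

theory Defs
  imports "HOL-Analysis.Analysis"
begin

text \<open>Countable structures are coded by binary relations on the vertex set \<open>nat\<close> (= omega),
  i.e. points of the compact space \<open>nat \<Rightarrow> nat \<Rightarrow> bool\<close> with the product topology
  (bool carries the discrete topology); this is the usual coding of the standard Borel
  spaces of countable structures.\<close>

type_synonym code = "nat \<Rightarrow> nat \<Rightarrow> bool"

definition graphs_X :: "code set" where
  "graphs_X = {R. (\<forall>a b. R a b \<longrightarrow> R b a) \<and> (\<forall>a. \<not> R a a) \<and> (\<forall>a. \<exists>b. R a b)}"

text \<open>The space Y: countable pointed reflexive graphs, coded on vertex set omega with
  distinguished vertex (the constant c) equal to 0; c is adjacent to every vertex.\<close>
definition graphs_Y :: "code set" where
  "graphs_Y = {S. (\<forall>a b. S a b \<longrightarrow> S b a) \<and> (\<forall>a. S a a) \<and> (\<forall>a. S 0 a)}"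

definition inj_hom_le :: "code \<Rightarrow> code \<Rightarrow> bool" where
  "inj_hom_le R R' \<longleftrightarrow> (\<exists>f::nat \<Rightarrow> nat. inj f \<and> (\<forall>a b. R a b \<longrightarrow> R' (f a) (f b)))"

text \<open>\<open>surj_hom_onto S S'\<close>: there is a surjective homomorphism of pointed reflexive graphs
  from S' onto S (written S \<twoheadleftarrow> S' in the paper).\<close>
definition surj_hom_onto :: "code \<Rightarrow> code \<Rightarrow> bool" where
  "surj_hom_onto S S' \<longleftrightarrow>
     (\<exists>h::nat \<Rightarrow> nat. surj h \<and> h 0 = 0 \<and> (\<forall>a b. S' a b \<longrightarrow> S (h a) (h b)))"

text \<open>The explicit map F: vertex v of Gamma becomes vertex v+1, the new vertex c is 0;
  edges among old vertices are the non-edges of Gamma, and c is adjacent to everything.\<close>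
definition F_map :: "code \<Rightarrow> code" where
  "F_map R = (\<lambda>i j. i = 0 \<or> j = 0 \<or> \<not> R (i - 1) (j - 1))"

definition analytic_set :: "'a::topological_space set \<Rightarrow> bool" where
  "analytic_set A \<longleftrightarrow> A = {} \<or> (\<exists>g::(nat \<Rightarrow> nat) \<Rightarrow> 'a. continuous_on UNIV g \<and> range g = A)"

definition analytic_qo_on :: "'a::topological_space set \<Rightarrow> ('a \<Rightarrow> 'a \<Rightarrow> bool) \<Rightarrow> bool" where
  "analytic_qo_on A Q \<longleftrightarrow>
     (\<forall>x\<in>A. Q x x) \<and> (\<forall>x\<in>A. \<forall>y\<in>A. \<forall>z\<in>A. Q x y \<longrightarrow> Q y z \<longrightarrow> Q x z)
     \<and> analytic_set {(x, y). x \<in> A \<and> y \<in> A \<and> Q x y}"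

definition borel_reduces :: "('x::topological_space \<Rightarrow> 'x \<Rightarrow> bool) \<Rightarrow> 'a::topological_space set
     \<Rightarrow> ('a \<Rightarrow> 'a \<Rightarrow> bool) \<Rightarrow> bool" where
  "borel_reduces P A Q \<longleftrightarrow>
     (\<exists>f. f \<in> borel_measurable borel \<and> (\<forall>x. f x \<in> A) \<and> (\<forall>x x'. P x x' \<longleftrightarrow> Q (f x) (f x')))"

text \<open>Q is complete for analytic quasi-orders on Polish spaces of type 'x (the theorem quantifies
  over all Polish types 'x; every standard Borel space is Borel-isomorphic to a Polish one).\<close>
definition complete_wrt :: "'x::polish_space itself \<Rightarrow> 'a::topological_space set
     \<Rightarrow> ('a \<Rightarrow> 'a \<Rightarrow> bool) \<Rightarrow> bool" where
  "complete_wrt _ A Q \<longleftrightarrow> analytic_qo_on A Q \<and>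
     (\<forall>P::'x \<Rightarrow> 'x \<Rightarrow> bool. analytic_qo_on UNIV P \<longrightarrow> borel_reduces P A Q)"

end

theory Submission
  imports Defs "HOL-Library.Nat_Bijection"
begin

text \<open>An injective homomorphism f
  of \<open>\<Gamma>\<close> into \<open>\<Delta>\<close> gives a surjection of F(\<open>\<Delta>\<close>) onto F(\<open>\<Gamma>\<close>) that sends f(v) to v and
  everything else to c; conversely, a right inverse of a pointed surjective homomorphism
  F(\<open>\<Delta>\<close>) \<open>\<rightarrow>\<close> F(\<open>\<Gamma>\<close>) is an injective homomorphism \<open>\<Gamma>\<close> \<open>\<rightarrow>\<close> \<open>\<Delta>\<close>, because the non-edges of
  \<open>\<Delta>\<close> are edges of F(\<open>\<Delta>\<close>). Neither direction uses the absence of isolated vertices.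
  Completeness then transfers along the continuous map F, once surjective homomorphism is
  known to be an analytic quasi-order. Analyticity comes from an explicit continuous
  parametrisation, by Baire space, of the pairs (S, T) admitting a surjective homomorphism
  h from T onto S.\<close>

lemma continuous_on_locally_finitely_determined:
  fixes f :: "('i \<Rightarrow> 'a::discrete_topology) \<Rightarrow> 'b::topological_space"
  assumes "\<And>x. \<exists>J. finite J \<and> (\<forall>y. (\<forall>j\<in>J. y j = x j) \<longrightarrow> f y = f x)"
  shows "continuous_on UNIV f"
proof -
  have locally_constant: "eventually (\<lambda>y. f y = f x) (nhds x)" for x
  proof -
    obtain J where "finite J" and J: "\<And>y. \<forall>j\<in>J. y j = x j \<Longrightarrow> f y = f x"
      using assms by blast
    let ?U = "\<Inter>j\<in>J. (\<lambda>y. y j) -` {x j}"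
    have "open ((\<lambda>y. y j) -` {x j})" for j
      by (rule open_vimage[OF open_discrete continuous_on_product_coordinates])
    then have "open ?U"
      using \<open>finite J\<close> by blast
    moreover have "x \<in> ?U" and "\<forall>y\<in>?U. f y = f x"
      using J by blast+
    ultimately show ?thesis
      unfolding eventually_nhds by blast
  qed
  have "eventually (\<lambda>y. f y = f x) (at x within UNIV)" for x
    using locally_constant[of x] unfolding eventually_at_filter by (rule eventually_mono) simp
  then have "(f \<longlongrightarrow> f x) (at x within UNIV)" for x
    by (rule tendsto_eventually)
  then show ?thesis
    by (simp add: continuous_on_def)
qed

lemma continuous_on_F_map: "continuous_on UNIV F_map"
  unfolding F_map_def
proof (intro continuous_on_coordinatewise_then_product)
  fix i j
  have "continuous_on UNIV (\<lambda>R::code. R (i - 1))"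
    by (rule continuous_on_product_coordinates)
  then have "continuous_on UNIV (\<lambda>R::code. R (i - 1) (j - 1))"
    by (rule continuous_on_product_then_coordinatewise)
  then have "continuous_on UNIV ((\<lambda>b. i = 0 \<or> j = 0 \<or> \<not> b) \<circ> (\<lambda>R::code. R (i - 1) (j - 1)))"
    by (rule continuous_on_compose) simp
  then show "continuous_on UNIV (\<lambda>R::code. i = 0 \<or> j = 0 \<or> \<not> R (i - 1) (j - 1))"
    by (simp add: o_def)
qed

lemma F_map_in_graphs_Y:
  assumes "\<And>a b. R a b \<Longrightarrow> R b a" and "\<And>a. \<not> R a a"
  shows "F_map R \<in> graphs_Y"
  using assms unfolding graphs_Y_def F_map_def by auto

lemma surj_hom_onto_F_map_if_inj_hom_le:
  assumes "inj_hom_le R R'"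
  shows "surj_hom_onto (F_map R) (F_map R')"
proof -
  obtain f where "inj f" and f_hom: "\<And>a b. R a b \<Longrightarrow> R' (f a) (f b)"
    using assms unfolding inj_hom_le_def by blast
  define h where "h m = (if m \<noteq> 0 \<and> m - 1 \<in> range f then inv f (m - 1) + 1 else 0)" for m
  have h_f: "h (f v + 1) = v + 1" for v
    unfolding h_def using \<open>inj f\<close> by simp
  have "surj h"
  proof (rule surjI)
    fix v
    show "h (if v = 0 then 0 else f (v - 1) + 1) = v"
      using h_f[of "v - 1"] by (auto simp: h_def)
  qed
  moreover have "F_map R (h a) (h b)" if "F_map R' a b" for a b
  proof (cases "h a = 0 \<or> h b = 0")
    case False
    then obtain u v where a: "a \<noteq> 0" "a - 1 = f u" "h a = u + 1"
      and b: "b \<noteq> 0" "b - 1 = f v" "h b = v + 1"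
      unfolding h_def using \<open>inj f\<close> by (auto split: if_splits)
    then have "\<not> R' (f u) (f v)"
      using that unfolding F_map_def by metis
    then have "\<not> R u v"
      using f_hom by blast
    then show ?thesis
      unfolding F_map_def a b by simp
  qed (auto simp: F_map_def)
  ultimately show ?thesis
    unfolding surj_hom_onto_def by (intro exI[of _ h]) (auto simp: h_def)
qed

lemma inj_hom_le_if_surj_hom_onto_F_map:
  assumes "surj_hom_onto (F_map R) (F_map R')"
  shows "inj_hom_le R R'"
proof -
  obtain h where "surj h" "h 0 = 0" and h_hom: "\<And>a b. F_map R' a b \<Longrightarrow> F_map R (h a) (h b)"
    using assms unfolding surj_hom_onto_def by blast
  define f where "f v = inv h (v + 1) - 1" for v
  have "inv h (v + 1) \<noteq> 0" for v
    using surj_f_inv_f[OF \<open>surj h\<close>, of "v + 1"] \<open>h 0 = 0\<close> by (metis Suc_eq_plus1 nat.simps(3))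
  then have h_f: "h (f v + 1) = v + 1" for v
    unfolding f_def using surj_f_inv_f[OF \<open>surj h\<close>] by simp
  have "inj f"
    by (rule injI) (metis h_f add_right_cancel)
  moreover have "R' (f u) (f v)" if "R u v" for u v
  proof (rule ccontr)
    assume "\<not> R' (f u) (f v)"
    then have "F_map R' (f u + 1) (f v + 1)"
      unfolding F_map_def by simp
    then have "F_map R (u + 1) (v + 1)"
      using h_hom h_f by metis
    with that show False
      unfolding F_map_def by simp
  qed
  ultimately show ?thesis
    unfolding inj_hom_le_def by blast
qed

lemma inj_hom_le_iff_surj_hom_onto_F_map:
  "inj_hom_le R R' \<longleftrightarrow> surj_hom_onto (F_map R) (F_map R')"
  using surj_hom_onto_F_map_if_inj_hom_le inj_hom_le_if_surj_hom_onto_F_map by blast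

lemma surj_hom_onto_refl: "surj_hom_onto S S"
  unfolding surj_hom_onto_def by (intro exI[of _ id]) auto

lemma surj_hom_onto_trans:
  assumes "surj_hom_onto S T" and "surj_hom_onto T U"
  shows "surj_hom_onto S U"
proof -
  obtain h where "surj h" "h 0 = 0" "\<forall>a b. T a b \<longrightarrow> S (h a) (h b)"
    using assms(1) unfolding surj_hom_onto_def by blast
  moreover obtain h' where "surj h'" "h' 0 = 0" "\<forall>a b. U a b \<longrightarrow> T (h' a) (h' b)"
    using assms(2) unfolding surj_hom_onto_def by blast
  moreover have "surj (h \<circ> h')"
    using \<open>surj h\<close> \<open>surj h'\<close> by (rule comp_surj[rotated])
  ultimately show ?thesis
    unfolding surj_hom_onto_def by (metis comp_apply)
qed

definition surj_hom_pairs :: "(code \<times> code) set" where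
  "surj_hom_pairs = {(S, T). S \<in> graphs_Y \<and> T \<in> graphs_Y \<and> surj_hom_onto S T}"

definition pointed_closure :: "code \<Rightarrow> code" where
  "pointed_closure S i j \<longleftrightarrow> i = j \<or> i = 0 \<or> j = 0 \<or> S i j \<or> S j i"

lemma pointed_closure_in_graphs_Y: "pointed_closure S \<in> graphs_Y"
  unfolding graphs_Y_def pointed_closure_def by auto

lemma pointed_closure_of_graphs_Y:
  assumes "S \<in> graphs_Y"
  shows "pointed_closure S = S"
  using assms unfolding graphs_Y_def pointed_closure_def fun_eq_iff by blast

text \<open>Surjectivity of h is not a closed condition, so it is enforced by a candidate right
  inverse g: as long as no finite stage refutes that h fixes 0 and inverts g, h is kept;
  after a refutation, h is replaced by the surjection \<open>fst \<circ> prod_decode\<close>.\<close>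

definition right_inverse_refuted :: "(nat \<Rightarrow> nat) \<Rightarrow> (nat \<Rightarrow> nat) \<Rightarrow> nat \<Rightarrow> bool" where
  "right_inverse_refuted h g n \<longleftrightarrow> h 0 \<noteq> 0 \<or> (\<exists>y\<le>n. g y \<le> n \<and> h (g y) \<noteq> y)"

lemma right_inverse_refuted_cong:
  assumes "\<And>k. k \<le> n \<Longrightarrow> h' k = h k" and "\<And>k. k \<le> n \<Longrightarrow> g' k = g k"
  shows "right_inverse_refuted h' g' n \<longleftrightarrow> right_inverse_refuted h g n"
  unfolding right_inverse_refuted_def using assms by (metis le0)

lemma right_inverse_refuted_mono:
  "right_inverse_refuted h g n \<Longrightarrow> n \<le> n' \<Longrightarrow> right_inverse_refuted h g n'"
  unfolding right_inverse_refuted_def by (meson order_trans)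

definition surj_repair :: "(nat \<Rightarrow> nat) \<Rightarrow> (nat \<Rightarrow> nat) \<Rightarrow> nat \<Rightarrow> nat" where
  "surj_repair h g m =
     (if m = 0 then 0 else if right_inverse_refuted h g (m - 1) then fst (prod_decode m) else h m)"

lemma surj_repair_0 [simp]: "surj_repair h g 0 = 0"
  by (simp add: surj_repair_def)

lemma surj_repair_eq:
  assumes "h 0 = 0" and "\<And>y. h (g y) = y"
  shows "surj_repair h g = h"
  using assms by (auto simp: surj_repair_def right_inverse_refuted_def fun_eq_iff)

lemma surj_surj_repair: "surj (surj_repair h g)"
proof (cases "\<exists>n. right_inverse_refuted h g n")
  case True
  then obtain n where n: "right_inverse_refuted h g n" ..
  show ?thesis
  proof (rule surjI)
    fix y
    define m where "m = prod_encode (y, Suc n)"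
    have "Suc n \<le> m"
      unfolding m_def by (rule le_prod_encode_2)
    then have "right_inverse_refuted h g (m - 1)" and "m \<noteq> 0"
      using right_inverse_refuted_mono[OF n, of "m - 1"] by auto
    then show "surj_repair h g m = y"
      unfolding surj_repair_def m_def by simp
  qed
next
  case False
  then have "h 0 = 0" and "\<forall>n y. y \<le> n \<longrightarrow> g y \<le> n \<longrightarrow> h (g y) = y"
    unfolding right_inverse_refuted_def by auto
  then have h_g: "h (g y) = y" for y
    by (meson max.cobounded1 max.cobounded2)
  with \<open>h 0 = 0\<close> have "surj_repair h g = h"
    by (rule surj_repair_eq)
  then show ?thesis
    using h_g by (metis surjI)
qed

lemma surj_repair_cong:
  assumes "\<And>k. k \<le> m \<Longrightarrow> h' k = h k" and "\<And>k. k \<le> m \<Longrightarrow> g' k = g k"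
  shows "surj_repair h' g' m = surj_repair h g m"
proof -
  have "right_inverse_refuted h' g' (m - 1) \<longleftrightarrow> right_inverse_refuted h g (m - 1)"
    by (rule right_inverse_refuted_cong) (simp_all add: assms)
  then show ?thesis
    by (simp add: surj_repair_def assms)
qed

text \<open>T is cut down to the edges that the repaired map sends to edges of S, so that every
  parameter yields a pair in the relation.\<close>

definition surj_hom_pair :: "code \<Rightarrow> code \<Rightarrow> (nat \<Rightarrow> nat) \<Rightarrow> (nat \<Rightarrow> nat) \<Rightarrow> code \<times> code" where
  "surj_hom_pair S T h g =
     (pointed_closure S,
      pointed_closure (\<lambda>a b. T a b \<and> pointed_closure S (surj_repair h g a) (surj_repair h g b)))"

lemma surj_hom_pair_in_surj_hom_pairs: "surj_hom_pair S T h g \<in> surj_hom_pairs"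
proof -
  have "pointed_closure S (surj_repair h g a) (surj_repair h g b)"
    if "pointed_closure (\<lambda>a b. T a b \<and> pointed_closure S (surj_repair h g a) (surj_repair h g b)) a b"
    for a b
    using that unfolding pointed_closure_def by auto
  then show ?thesis
    unfolding surj_hom_pairs_def surj_hom_pair_def surj_hom_onto_def
    using pointed_closure_in_graphs_Y surj_surj_repair surj_repair_0 by blast
qed

lemma surj_hom_pair_eq:
  assumes "S \<in> graphs_Y" "T \<in> graphs_Y" "h 0 = 0" "\<And>y. h (g y) = y"
    and "\<And>a b. T a b \<Longrightarrow> S (h a) (h b)"
  shows "surj_hom_pair S T h g = (S, T)"
proof -
  have "(\<lambda>a b. T a b \<and> S (h a) (h b)) = T"
    using assms(5) by blast
  then show ?thesis
    unfolding surj_hom_pair_def surj_repair_eq[OF assms(3,4)]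
    using pointed_closure_of_graphs_Y assms(1,2) by simp
qed

definition strand :: "nat \<Rightarrow> (nat \<Rightarrow> nat) \<Rightarrow> nat \<Rightarrow> nat" where
  "strand k w n = w (prod_encode (k, n))"

definition interleave :: "(nat \<Rightarrow> nat \<Rightarrow> nat) \<Rightarrow> nat \<Rightarrow> nat" where
  "interleave u m = case_prod u (prod_decode m)"

lemma strand_interleave [simp]: "strand k (interleave u) = u k"
  by (simp add: strand_def interleave_def fun_eq_iff)

definition rel_of_seq :: "(nat \<Rightarrow> nat) \<Rightarrow> code" where
  "rel_of_seq s i j \<longleftrightarrow> s (prod_encode (i, j)) \<noteq> 0"

definition seq_of_rel :: "code \<Rightarrow> nat \<Rightarrow> nat" where
  "seq_of_rel R m = (if case_prod R (prod_decode m) then 1 else 0)"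

lemma rel_of_seq_of_rel [simp]: "rel_of_seq (seq_of_rel R) = R"
  by (simp add: rel_of_seq_def seq_of_rel_def fun_eq_iff)

lemma continuous_on_if_determined_by_strands:
  fixes f :: "(nat \<Rightarrow> nat) \<Rightarrow> 'b::topological_space"
  assumes "\<And>x. \<exists>N. \<forall>y. (\<forall>k\<le>N. \<forall>n\<le>N. strand k y n = strand k x n) \<longrightarrow> f y = f x"
  shows "continuous_on UNIV f"
proof (rule continuous_on_locally_finitely_determined)
  fix x
  obtain N where N: "\<forall>y. (\<forall>k\<le>N. \<forall>n\<le>N. strand k y n = strand k x n) \<longrightarrow> f y = f x"
    using assms by blast
  show "\<exists>J. finite J \<and> (\<forall>y. (\<forall>j\<in>J. y j = x j) \<longrightarrow> f y = f x)"
  proof (intro exI conjI allI impI)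
    show "finite (prod_encode ` ({..N} \<times> {..N}))"
      by simp
    fix y
    assume "\<forall>j\<in>prod_encode ` ({..N} \<times> {..N}). y j = x j"
    then have "\<forall>k\<le>N. \<forall>n\<le>N. strand k y n = strand k x n"
      by (simp add: strand_def)
    then show "f y = f x"
      using N by blast
  qed
qed

definition baire_surj_hom_pair :: "(nat \<Rightarrow> nat) \<Rightarrow> code \<times> code" where
  "baire_surj_hom_pair w =
     surj_hom_pair (rel_of_seq (strand 0 w)) (rel_of_seq (strand 1 w)) (strand 2 w) (strand 3 w)"

lemma range_baire_surj_hom_pair: "range baire_surj_hom_pair = surj_hom_pairs"
proof
  show "range baire_surj_hom_pair \<subseteq> surj_hom_pairs"
    unfolding baire_surj_hom_pair_def using surj_hom_pair_in_surj_hom_pairs by blast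
  show "surj_hom_pairs \<subseteq> range baire_surj_hom_pair"
  proof (clarify)
    fix S T assume "(S, T) \<in> surj_hom_pairs"
    then obtain h where "S \<in> graphs_Y" "T \<in> graphs_Y" "surj h" "h 0 = 0"
      and "\<And>a b. T a b \<Longrightarrow> S (h a) (h b)"
      unfolding surj_hom_pairs_def surj_hom_onto_def by blast
    then have "baire_surj_hom_pair (interleave (\<lambda>k. [seq_of_rel S, seq_of_rel T, h, inv h] ! k))
        = (S, T)"
      unfolding baire_surj_hom_pair_def by (simp add: surj_hom_pair_eq surj_f_inv_f)
    then show "(S, T) \<in> range baire_surj_hom_pair"
      by (metis rangeI)
  qed
qed

lemma continuous_on_baire_surj_hom_pair: "continuous_on UNIV baire_surj_hom_pair"
  unfolding baire_surj_hom_pair_def surj_hom_pair_def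
proof (intro continuous_on_Pair continuous_on_coordinatewise_then_product)
  fix i j
  show "continuous_on UNIV (\<lambda>w. pointed_closure (rel_of_seq (strand 0 w)) i j)"
  proof (rule continuous_on_if_determined_by_strands)
    fix x
    show "\<exists>N. \<forall>y. (\<forall>k\<le>N. \<forall>n\<le>N. strand k y n = strand k x n) \<longrightarrow>
        pointed_closure (rel_of_seq (strand 0 y)) i j = pointed_closure (rel_of_seq (strand 0 x)) i j"
      by (rule exI[of _ "prod_encode (i, j) + prod_encode (j, i)"])
        (simp add: pointed_closure_def rel_of_seq_def)
  qed
next
  fix a b
  let ?S = "\<lambda>w. pointed_closure (rel_of_seq (strand 0 w))"
  let ?h = "\<lambda>w. surj_repair (strand 2 w) (strand 3 w)"
  show "continuous_on UNIV
      (\<lambda>w. pointed_closure (\<lambda>a b. rel_of_seq (strand 1 w) a b \<and> ?S w (?h w a) (?h w b)) a b)"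
  proof (rule continuous_on_if_determined_by_strands)
    fix x
    \<comment> \<open>N bounds the index of every strand entry that this coordinate reads at x\<close>
    define N where "N = prod_encode (a, b) + prod_encode (b, a) + a + b + 3
      + prod_encode (?h x a, ?h x b) + prod_encode (?h x b, ?h x a)"
    have "pointed_closure (\<lambda>a b. rel_of_seq (strand 1 y) a b \<and> ?S y (?h y a) (?h y b)) a b
        = pointed_closure (\<lambda>a b. rel_of_seq (strand 1 x) a b \<and> ?S x (?h x a) (?h x b)) a b"
      if agree: "\<forall>k\<le>N. \<forall>n\<le>N. strand k y n = strand k x n" for y
    proof -
      have "?h y c = ?h x c" if "c \<le> a + b" for c
        by (rule surj_repair_cong) (use agree that in \<open>simp add: N_def\<close>)+
      moreover have "?S y (?h x a) (?h x b) = ?S x (?h x a) (?h x b)"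
        using agree by (simp add: N_def pointed_closure_def rel_of_seq_def)
      moreover have "rel_of_seq (strand 1 y) c d = rel_of_seq (strand 1 x) c d"
        if "{c, d} = {a, b}" for c d
        using agree that by (auto simp: N_def rel_of_seq_def doubleton_eq_iff)
      ultimately show ?thesis
        unfolding pointed_closure_def by auto
    qed
    then show "\<exists>N. \<forall>y. (\<forall>k\<le>N. \<forall>n\<le>N. strand k y n = strand k x n) \<longrightarrow>
        pointed_closure (\<lambda>a b. rel_of_seq (strand 1 y) a b \<and> ?S y (?h y a) (?h y b)) a b
        = pointed_closure (\<lambda>a b. rel_of_seq (strand 1 x) a b \<and> ?S x (?h x a) (?h x b)) a b"
      by blast
  qed
qed

lemma analytic_qo_on_surj_hom_onto: "analytic_qo_on graphs_Y surj_hom_onto"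
proof -
  have "analytic_set surj_hom_pairs"
    unfolding analytic_set_def
    using continuous_on_baire_surj_hom_pair range_baire_surj_hom_pair by blast
  then show ?thesis
    unfolding analytic_qo_on_def surj_hom_pairs_def
    using surj_hom_onto_refl surj_hom_onto_trans by blast
qed

lemma complete_wrt_transfer:
  assumes "complete_wrt TYPE('x::polish_space) A P" and "analytic_qo_on B Q"
    and "F \<in> borel_measurable borel" and "F ` A \<subseteq> B"
    and "\<And>a a'. a \<in> A \<Longrightarrow> a' \<in> A \<Longrightarrow> P a a' \<longleftrightarrow> Q (F a) (F a')"
  shows "complete_wrt TYPE('x) B Q"
  unfolding complete_wrt_def
proof (intro conjI allI impI)
  fix P' :: "'x \<Rightarrow> 'x \<Rightarrow> bool"
  assume "analytic_qo_on UNIV P'"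
  then obtain f where "f \<in> borel_measurable borel" "\<forall>x. f x \<in> A"
    and "\<forall>x x'. P' x x' \<longleftrightarrow> P (f x) (f x')"
    using assms(1) unfolding complete_wrt_def borel_reduces_def by blast
  then show "borel_reduces P' B Q"
    unfolding borel_reduces_def using assms(3-5)
    by (intro exI[of _ "F \<circ> f"]) (auto intro: measurable_comp)
qed (rule assms(2))

theorem proposition3p3:
  shows "F_map \<in> borel_measurable borel \<and> F_map ` graphs_X \<subseteq> graphs_Y
    \<and> (\<forall>R\<in>graphs_X. \<forall>R'\<in>graphs_X. inj_hom_le R R' \<longleftrightarrow> surj_hom_onto (F_map R) (F_map R'))
    \<and> (complete_wrt TYPE('x::polish_space) graphs_X inj_hom_le
         \<longrightarrow> complete_wrt TYPE('x) graphs_Y surj_hom_onto)"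
proof (intro conjI impI)
  show measurable: "F_map \<in> borel_measurable borel"
    using continuous_on_F_map by (rule borel_measurable_continuous_onI)
  show image: "F_map ` graphs_X \<subseteq> graphs_Y"
    using F_map_in_graphs_Y unfolding graphs_X_def by blast
  show "\<forall>R\<in>graphs_X. \<forall>R'\<in>graphs_X. inj_hom_le R R' \<longleftrightarrow> surj_hom_onto (F_map R) (F_map R')"
    using inj_hom_le_iff_surj_hom_onto_F_map by blast
  assume "complete_wrt TYPE('x) graphs_X inj_hom_le"
  then show "complete_wrt TYPE('x) graphs_Y surj_hom_onto"
    by (rule complete_wrt_transfer[OF _ analytic_qo_on_surj_hom_onto measurable image])
      (rule inj_hom_le_iff_surj_hom_onto_F_map)
qed

end
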